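(* Let $(k_i)_{i\in\mathbb N}\subset\mathbb N$ be the coding sequence of an interval translation map of infinite type. Then the $S$-adic subshift $(X,\sigma)$ based on the substitutions $(\chi_{k_i})_{i\in\mathbb N}$ is primitive, combinatorially recognizable and aperiodic.
   Context: Coding sequences of infinite-type maps in the family $T_{\alpha,\beta}(x)=x+\alpha$ on $[0,1-\alpha)$, $x+\beta$ on $[1-\alpha,1-\beta)$, $x-1+\beta$ on $[1-\beta,1]$ ($0<\beta\le\alpha\le1$) are exactly the sequences $(k_i)$ in $\mathbb N=\{1,2,\dots\}$ with $k_{2i}>1$ for infinitely many $i$ and $k_{2i-1}>1$ for infinitely many $i$. For $k\in\mathbb N$, $\chi_k$ is the substitution on $\{1,2,3\}$: $1\mapsto2$, $2\mapsto31^k$, $3\mapsto31^{k-1}$. An $S$-adic subshift based on substitutions $\chi_i:\mathcal A_i\to\mathcal A_{i-1}^+$ (here all alphabets are $\{1,2,3\}$ and $\chi_i=\chi_{k_i}$) is the shift-orbit closure $X$ of the set of accumulation points of $\{\chi_1\circ\cdots\circ\chi_n(a): n\in\mathbb N, a\in\mathcal A_n\}$; for $i\ge1$ let $X_i$ denote the $S$-adic subshift based on $(\chi_j)_{j\ge i}$. It is primitive if for every $m$ there is $n\ge m$ such that for all $a\in\mathcal A_n$ the word $\chi_m\circ\cdots\circ\chi_n(a)$ contains every letter of $\mathcal A_{m-1}$. A substitution $\chi$, relative to a subshift $Y$, is combinatorially recognizable if there is $N$ such that for every word $w$ occurring in $Y$ with $|w|\ge N$ and every word $v=v_1\cdots v_n$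 such that $w$ occurs twice in $\chi(v)$, the first occurrence of $w$ starts at a position of the form $|\chi(v_1\cdots v_i)|$ (some $0\le i<n$) if and only if the second occurrence starts at a position of the form $|\chi(v_1\cdots v_j)|$ (some $0\le j<n$). The $S$-adic subshift is combinatorially recognizable if each $\chi_i$ is combinatorially recognizable relative to $X_i$ (with $N$ allowed to depend on $i$). It is aperiodic if there is no $x\in X$ and $k\in\mathbb N$ with $\sigma^k x=x$. *)

theory Defs
  imports Main
begin

text \<open>Letters are the natural numbers 1, 2, 3; finite words are lists, one-sided
infinite words are functions nat => nat.  Coding sequences are indexed from 1
(the value at index 0 is irrelevant).\<close>

definition alphabet :: "nat set" where
  "alphabet = {1, 2, 3}"

definition chi :: "nat \<Rightarrow> nat \<Rightarrow> nat list" where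
  "chi k a = (if a = 1 then [2]
              else if a = 2 then 3 # replicate k 1
              else if a = 3 then 3 # replicate (k - 1) 1
              else [])"

definition subst_word :: "(nat \<Rightarrow> nat list) \<Rightarrow> nat list \<Rightarrow> nat list" where
  "subst_word s w = concat (map s w)"

text \<open>chi_{k_m} o ... o chi_{k_n} applied to a word (chi_{k_n} applied first).\<close>
definition chi_comp :: "(nat \<Rightarrow> nat) \<Rightarrow> nat \<Rightarrow> nat \<Rightarrow> nat list \<Rightarrow> nat list" where
  "chi_comp ks m n w = foldr (\<lambda>j u. subst_word (chi (ks j)) u) [m..<Suc n] w"

definition coding_seq_infinite_type :: "(nat \<Rightarrow> nat) \<Rightarrow> bool" where
  "coding_seq_infinite_type ks \<longleftrightarrow>
     (\<forall>i\<ge>1. ks i \<ge> 1) \<and>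
     infinite {i. i \<ge> 1 \<and> ks (2 * i) > 1} \<and>
     infinite {i. i \<ge> 1 \<and> ks (2 * i - 1) > 1}"

text \<open>Accumulation points (in A^N, w.r.t. the prefix topology on A^* \<union> A^N) of a set of finite words.\<close>
definition acc_points :: "nat list set \<Rightarrow> (nat \<Rightarrow> nat) set" where
  "acc_points W = {x. \<forall>m. \<exists>w\<in>W. m \<le> length w \<and> (\<forall>j<m. w ! j = x j)}"

definition orbit_closure :: "(nat \<Rightarrow> nat) set \<Rightarrow> (nat \<Rightarrow> nat) set" where
  "orbit_closure A = {x. \<forall>m. \<exists>y\<in>A. \<exists>j. \<forall>t<m. y (j + t) = x t}"

definition shift :: "(nat \<Rightarrow> nat) \<Rightarrow> nat \<Rightarrow> nat" where
  "shift x = (\<lambda>t. x (Suc t))"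

definition sadic_subshift :: "(nat \<Rightarrow> nat) \<Rightarrow> nat \<Rightarrow> (nat \<Rightarrow> nat) set" where
  "sadic_subshift ks i =
     orbit_closure (acc_points {chi_comp ks i n [a] | n a. n \<ge> i \<and> a \<in> alphabet})"

definition sadic_primitive :: "(nat \<Rightarrow> nat) \<Rightarrow> bool" where
  "sadic_primitive ks \<longleftrightarrow>
     (\<forall>m\<ge>1. \<exists>n\<ge>m. \<forall>a\<in>alphabet. alphabet \<subseteq> set (chi_comp ks m n [a]))"

definition occurs_at :: "nat list \<Rightarrow> nat list \<Rightarrow> nat \<Rightarrow> bool" where
  "occurs_at w u p \<longleftrightarrow> p + length w \<le> length u \<and> take (length w) (drop p u) = w"

definition factor_of :: "nat list \<Rightarrow> (nat \<Rightarrow> nat) \<Rightarrow> bool" where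
  "factor_of w y \<longleftrightarrow> (\<exists>j. \<forall>t<length w. y (j + t) = w ! t)"

definition cut_points :: "(nat \<Rightarrow> nat list) \<Rightarrow> nat list \<Rightarrow> nat set" where
  "cut_points s v = {length (subst_word s (take i v)) | i. i < length v}"

definition comb_recognizable :: "(nat \<Rightarrow> nat list) \<Rightarrow> (nat \<Rightarrow> nat) set \<Rightarrow> bool" where
  "comb_recognizable s Y \<longleftrightarrow>
     (\<exists>N. \<forall>w v p q.
        (\<exists>y\<in>Y. factor_of w y) \<and> length w \<ge> N \<and> set v \<subseteq> alphabet \<and>
        occurs_at w (subst_word s v) p \<and> occurs_at w (subst_word s v) q \<longrightarrow>
        (p \<in> cut_points s v \<longleftrightarrow> q \<in> cut_points s v))"

definition sadic_comb_recognizable :: "(nat \<Rightarrow> nat) \<Rightarrow> bool" where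
  "sadic_comb_recognizable ks \<longleftrightarrow>
     (\<forall>i\<ge>1. comb_recognizable (chi (ks i)) (sadic_subshift ks i))"

definition aperiodic :: "(nat \<Rightarrow> nat) set \<Rightarrow> bool" where
  "aperiodic X \<longleftrightarrow> \<not> (\<exists>x\<in>X. \<exists>k\<ge>1. (shift ^^ k) x = x)"

end

(*
  Every block chi_k(a) is a letter 2 or 3 followed by 1s, so the cut points of chi_k(v) are exactly
  the positions carrying a letter other than 1.  This gives recognizability with N = 1, and it lets
  one desubstitute every factor that starts with, and is followed by, a letter other than 1.

  Aperiodicity: a periodic point of X makes all powers of a nonempty word u factors of X_1.  This
  is refuted by induction on the length of u.  If u contains 1, then u = 1^n is impossible because
  1^(k+1) is never a factor of an image of chi_k, and otherwise a conjugate of u starting with a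
  letter other than 1 desubstitutes to a strictly shorter word with the same property one level
  up.  If u contains 2 but not 1, its desubstitution contains 1.  Powers of 3 force k_j = 1 at all
  later levels, against the infinite-type condition.

  Primitivity: under chi_k the letters produce 1 -> {2}, 2 -> {1,3}, 3 -> {3} or, when k > 1,
  {1,3}.  After three steps, the last with k > 1, every letter has produced 1 and 3.  The set {1,3}
  is restored by every pair of steps and becomes the whole alphabet at a step with k > 1, after
  which it stays full.  Single steps alternate between {1,3} and {2,3}, which is why indices with
  k > 1 of both parities are needed.
*)

theory Submission
  imports Defs "HOL-Library.Sublist" "HOL-Library.Infinite_Set"
begin

abbreviation chi_word :: "nat \<Rightarrow> nat list \<Rightarrow> nat list" where
  "chi_word k \<equiv> subst_word (chi k)"

lemma subst_word_Nil [simp]: "subst_word s [] = []"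
  by (simp add: subst_word_def)

lemma subst_word_Cons [simp]: "subst_word s (a # v) = s a @ subst_word s v"
  by (simp add: subst_word_def)

lemma subst_word_append [simp]: "subst_word s (v @ w) = subst_word s v @ subst_word s w"
  by (simp add: subst_word_def)

lemma set_subst_word: "set (subst_word s v) = (\<Union>a\<in>set v. set (s a))"
  by (simp add: subst_word_def)

lemma subst_word_concat_replicate:
  "subst_word s (concat (replicate R u)) = concat (replicate R (subst_word s u))"
  by (induction R) auto

lemma concat_replicate_Suc_snoc: "concat (replicate (Suc R) u) = concat (replicate R u) @ u"
  by (induction R) auto

lemma concat_replicate_replicate: "concat (replicate R (replicate n a)) = replicate (R * n) a"
  by (induction R) (auto simp: replicate_add)

lemma coding_seq_ge_one: "coding_seq_infinite_type ks \<Longrightarrow> 1 \<le> j \<Longrightarrow> 1 \<le> ks j"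
  by (simp add: coding_seq_infinite_type_def)

lemma coding_seq_exists_large_index:
  assumes "coding_seq_infinite_type ks"
  shows "\<exists>j>b. 1 < ks j \<and> even j = e"
proof (cases e)
  case True
  have "infinite {i. 1 \<le> i \<and> 1 < ks (2 * i)}"
    using assms by (simp add: coding_seq_infinite_type_def)
  then obtain i where "b < i" "1 < ks (2 * i)"
    unfolding infinite_nat_iff_unbounded by blast
  then show ?thesis
    using True by (intro exI[of _ "2 * i"]) auto
next
  case False
  have "infinite {i. 1 \<le> i \<and> 1 < ks (2 * i - 1)}"
    using assms by (simp add: coding_seq_infinite_type_def)
  then obtain i where "b < i" "1 < ks (2 * i - 1)"
    unfolding infinite_nat_iff_unbounded by blast
  moreover have "odd (2 * i - 1)"
    using \<open>b < i\<close> by simp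
  ultimately show ?thesis
    using False by (intro exI[of _ "2 * i - 1"]) auto
qed

section \<open>Blocks of chi and recognizability\<close>

lemma alphabet_iff: "a \<in> alphabet \<longleftrightarrow> a = 1 \<or> a = 2 \<or> a = 3"
  by (auto simp: alphabet_def)

lemma chi_Cons_replicate_one: "a \<in> alphabet \<Longrightarrow> \<exists>c r. chi k a = c # replicate r 1 \<and> c \<noteq> 1 \<and> r \<le> k"
  by (auto simp: alphabet_iff chi_def)

lemma set_chi_subset_alphabet: "set (chi k a) \<subseteq> alphabet"
  by (auto simp: alphabet_iff chi_def)

lemma chi_inj: "1 \<le> k \<Longrightarrow> a \<in> alphabet \<Longrightarrow> b \<in> alphabet \<Longrightarrow> chi k a = chi k b \<Longrightarrow> a = b"
  by (auto simp: alphabet_iff chi_def)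

lemma set_chi_word_subset_alphabet: "set (chi_word k v) \<subseteq> alphabet"
  using set_chi_subset_alphabet by (auto simp: set_subst_word)

lemma hd_chi_word:
  assumes "set v \<subseteq> alphabet" and "v \<noteq> []"
  shows "chi_word k v \<noteq> [] \<and> hd (chi_word k v) \<noteq> 1"
proof -
  obtain a v' where "v = a # v'" using assms(2) by (cases v) auto
  moreover obtain c r where "chi k a = c # replicate r 1" "c \<noteq> 1"
    using chi_Cons_replicate_one[of a k] assms(1) \<open>v = a # v'\<close> by auto
  ultimately show ?thesis by simp
qed

lemma length_filter_chi_word:
  "set v \<subseteq> alphabet \<Longrightarrow> length (filter (\<lambda>c. c \<noteq> 1) (chi_word k v)) = length v"
proof (induction v)
  case (Cons a v)
  obtain c r where "chi k a = c # replicate r 1" "c \<noteq> 1"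
    using chi_Cons_replicate_one[of a k] Cons.prems by auto
  with Cons show ?case by simp
qed simp

lemma length_le_length_chi_word:
  assumes "set v \<subseteq> alphabet"
  shows "length v \<le> length (chi_word k v)"
  using length_filter_le[of "\<lambda>c. c \<noteq> 1" "chi_word k v"] unfolding length_filter_chi_word[OF assms] .

lemma length_less_length_chi_word:
  assumes "set v \<subseteq> alphabet" and "1 \<in> set (chi_word k v)"
  shows "length v < length (chi_word k v)"
  using length_filter_less[OF assms(2), of "\<lambda>c. c \<noteq> 1"] unfolding length_filter_chi_word[OF assms(1)] by simp

lemma chi_word_split_at_boundary:
  assumes "set v \<subseteq> alphabet" and "chi_word k v = xs @ ys" and "ys = [] \<or> hd ys \<noteq> 1"
  shows "\<exists>i. xs = chi_word k (take i v) \<and> ys = chi_word k (drop i v)"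
  using assms
proof (induction v arbitrary: xs)
  case Nil
  then show ?case by simp
next
  case (Cons b v)
  obtain c r where b: "chi k b = c # replicate r 1" "c \<noteq> 1"
    using Cons.prems(1) chi_Cons_replicate_one[of b k] by auto
  consider "xs = []" | "xs \<noteq> []" "length xs \<le> r" | "Suc r \<le> length xs"
    by linarith
  then show ?case
  proof cases
    case 1
    then show ?thesis using Cons.prems by (intro exI[of _ 0]) auto
  next
    case 2
    have "c # replicate r 1 @ chi_word k v = xs @ ys"
      using Cons.prems(2) b by simp
    then have "ys = drop (length xs) (c # replicate r 1 @ chi_word k v)"
      by (simp add: append_eq_conv_conj)
    then have "ys = replicate (r - (length xs - 1)) 1 @ chi_word k v"
      using 2 by (simp add: drop_Cons')
    moreover have "r - (length xs - 1) > 0"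
      using 2 by (cases xs) auto
    ultimately show ?thesis using Cons.prems(3) by simp
  next
    case 3
    have "length (chi k b) \<le> length xs"
      using 3 b(1) by simp
    moreover have "chi k b @ chi_word k v = xs @ ys"
      using Cons.prems(2) by simp
    ultimately have "chi k b = take (length (chi k b)) xs"
      and "chi_word k v = drop (length (chi k b)) xs @ ys"
      by (simp_all add: append_eq_append_conv_if)
    then obtain xs' where "xs = chi k b @ xs'" "chi_word k v = xs' @ ys"
      by (metis append_take_drop_id)
    moreover obtain i where "xs' = chi_word k (take i v)" "ys = chi_word k (drop i v)"
      using Cons.IH[OF _ \<open>chi_word k v = xs' @ ys\<close> Cons.prems(3)] Cons.prems(1) by auto
    ultimately show ?thesis
      by (intro exI[of _ "Suc i"]) simp
  qed
qed

lemma cut_points_chi_iff: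
  assumes v: "set v \<subseteq> alphabet" and p: "p < length (chi_word k v)"
  shows "p \<in> cut_points (chi k) v \<longleftrightarrow> chi_word k v ! p \<noteq> 1"
proof
  assume "p \<in> cut_points (chi k) v"
  then obtain i where i: "i < length v" "p = length (chi_word k (take i v))"
    by (auto simp: cut_points_def)
  have "drop i v \<noteq> []" "set (drop i v) \<subseteq> alphabet"
    using i(1) v by (auto dest: in_set_dropD)
  then have "chi_word k (drop i v) \<noteq> []" "hd (chi_word k (drop i v)) \<noteq> 1"
    using hd_chi_word by blast+
  moreover have "chi_word k v = chi_word k (take i v) @ chi_word k (drop i v)"
    by (metis append_take_drop_id subst_word_append)
  ultimately show "chi_word k v ! p \<noteq> 1"
    using i(2) by (simp add: nth_append hd_conv_nth)
next
  assume nonone: "chi_word k v ! p \<noteq> 1"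
  have "chi_word k v = take p (chi_word k v) @ drop p (chi_word k v)"
    by simp
  moreover have "hd (drop p (chi_word k v)) \<noteq> 1"
    using p nonone by (simp add: hd_drop_conv_nth)
  ultimately obtain i where i: "take p (chi_word k v) = chi_word k (take i v)"
      "drop p (chi_word k v) = chi_word k (drop i v)"
    using chi_word_split_at_boundary[OF v] by blast
  have "drop p (chi_word k v) \<noteq> []"
    using p by simp
  then have "chi_word k (drop i v) \<noteq> []"
    using i(2) by simp
  then have "drop i v \<noteq> []"
    by auto
  then have "i < length v"
    by simp
  moreover have "p = length (chi_word k (take i v))"
    using p by (simp flip: i(1))
  ultimately show "p \<in> cut_points (chi k) v"
    by (auto simp: cut_points_def)
qed

lemma comb_recognizable_chi: "comb_recognizable (chi k) Y"
  unfolding comb_recognizable_def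
proof (intro exI[of _ 1] allI impI)
  fix w v p q
  assume "(\<exists>y\<in>Y. factor_of w y) \<and> 1 \<le> length w \<and> set v \<subseteq> alphabet \<and>
      occurs_at w (chi_word k v) p \<and> occurs_at w (chi_word k v) q"
  then have w: "w \<noteq> []" and v: "set v \<subseteq> alphabet"
    and occ: "occurs_at w (chi_word k v) p" "occurs_at w (chi_word k v) q"
    by auto
  have first_letter: "r < length (chi_word k v) \<and> chi_word k v ! r = hd w"
    if "occurs_at w (chi_word k v) r" for r
  proof -
    from that have r: "r + length w \<le> length (chi_word k v)" "take (length w) (drop r (chi_word k v)) = w"
      by (auto simp: occurs_at_def)
    then have "r < length (chi_word k v)"
      using w by (cases w) auto
    moreover have "hd w = hd (take (length w) (drop r (chi_word k v)))"
      using r(2) by simp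
    ultimately show ?thesis
      using w by (simp add: hd_drop_conv_nth)
  qed
  show "p \<in> cut_points (chi k) v \<longleftrightarrow> q \<in> cut_points (chi k) v"
    using first_letter[OF occ(1)] first_letter[OF occ(2)] cut_points_chi_iff[OF v] by auto
qed

section \<open>Desubstitution\<close>

lemma chi_word_desubstitute:
  assumes v: "set v \<subseteq> alphabet" and "sublist (w @ [c]) (chi_word k v)"
    and "hd (w @ [c]) \<noteq> 1" and "c \<noteq> 1"
  shows "\<exists>y. sublist y v \<and> w = chi_word k y"
proof -
  obtain ps ss where e: "chi_word k v = ps @ (w @ c # ss)"
    using assms(2) by (auto simp: sublist_def)
  have "hd (w @ c # ss) \<noteq> 1"
    using assms(3) by (cases w) auto
  then obtain i where i: "chi_word k (drop i v) = w @ c # ss"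
    using chi_word_split_at_boundary[OF v e] by auto
  have "set (drop i v) \<subseteq> alphabet"
    using v by (auto dest: in_set_dropD)
  then obtain i' where "w = chi_word k (take i' (drop i v))"
    using chi_word_split_at_boundary[OF _ i] assms(4) by auto
  moreover have "sublist (take i' (drop i v)) v"
    by (metis append_take_drop_id sublist_appendI)
  ultimately show ?thesis by blast
qed

lemma chi_word_first_block:
  assumes k: "1 \<le> k" and b: "b \<in> alphabet" and z: "set z \<subseteq> alphabet" and y: "set y \<subseteq> alphabet"
    and e: "chi_word k z = chi k b @ chi_word k y"
  shows "\<exists>z'. z = b # z' \<and> chi_word k z' = chi_word k y"
proof -
  have "chi_word k y = [] \<or> hd (chi_word k y) \<noteq> 1"
    using hd_chi_word[OF y] by (cases "y = []") auto
  then obtain i where i: "chi k b = chi_word k (take i z)"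
    using chi_word_split_at_boundary[OF z e] by blast
  have "set (take i z) \<subseteq> alphabet"
    using set_take_subset z by (rule order_trans)
  then have "length (take i z) = length (filter (\<lambda>c. c \<noteq> 1) (chi_word k (take i z)))"
    by (rule length_filter_chi_word[symmetric])
  also have "\<dots> = length (filter (\<lambda>c. c \<noteq> 1) (chi_word k [b]))"
    using i by simp
  also have "\<dots> = 1"
    using length_filter_chi_word[of "[b]" k] b by simp
  finally have "length (take i z) = 1" .
  then obtain d z' where dz: "z = d # z'" "take i z = [d]"
    by (cases z; cases i) (simp_all add: min_def split: if_splits)
  then have "chi k b = chi k d"
    using i by simp
  then have "b = d"
    using chi_inj[OF k b] z dz(1) by simp
  moreover have "chi_word k z' = chi_word k y"
    using e dz(1) \<open>chi k b = chi k d\<close> by simp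
  ultimately show ?thesis
    using dz(1) by blast
qed

lemma chi_word_inj:
  assumes "1 \<le> k" and "set y \<subseteq> alphabet" and "set z \<subseteq> alphabet"
    and "chi_word k y = chi_word k z"
  shows "y = z"
  using assms(2-)
proof (induction y arbitrary: z)
  case Nil
  then show ?case
    using length_filter_chi_word[of z k] by simp
next
  case (Cons b y)
  have "chi_word k z = chi k b @ chi_word k y"
    using Cons.prems(3) by simp
  then obtain z' where "z = b # z'" "chi_word k z' = chi_word k y"
    using chi_word_first_block[OF assms(1) _ Cons.prems(2)] Cons.prems(1) by auto
  then show ?case
    using Cons.IH[of z'] Cons.prems(1,2) by simp
qed

lemma replicate_one_not_sublist_chi:
  assumes "a \<in> alphabet"
  shows "\<not> sublist (replicate (Suc k) 1) (chi k a)"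
proof
  obtain c r where a: "chi k a = c # replicate r 1" "c \<noteq> 1" "r \<le> k"
    using chi_Cons_replicate_one[OF assms] by blast
  assume "sublist (replicate (Suc k) 1) (chi k a)"
  then obtain ps ss where e: "chi k a = ps @ replicate (Suc k) 1 @ ss"
    by (auto simp: sublist_def)
  have "length (chi k a) = length ps + Suc k + length ss"
    using e by simp
  moreover have "length (chi k a) = Suc r"
    using a(1) by simp
  ultimately have "ps = []"
    using a(3) by simp
  then show False
    using e a(1,2) by simp
qed

text \<open>Runs of 1 cannot cross a block boundary.\<close>

lemma replicate_one_not_sublist_chi_word:
  assumes "set v \<subseteq> alphabet"
  shows "\<not> sublist (replicate (Suc k) 1) (chi_word k v)"
  using assms
proof (induction v)
  case Nil
  then show ?case by simp
next
  case (Cons b v)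
  then have b: "b \<in> alphabet" and v: "set v \<subseteq> alphabet"
    by auto
  have not_across: False
    if ones: "replicate (Suc k) 1 = xs1 @ xs2" and suf: "suffix xs1 (chi k b)"
      and pre: "prefix xs2 (chi_word k v)" for xs1 xs2
  proof (cases xs2)
    case Nil
    then have "suffix (replicate (Suc k) 1) (chi k b)"
      using ones suf by simp
    then show False
      using replicate_one_not_sublist_chi[OF b] suffix_imp_sublist by blast
  next
    case (Cons a xs2')
    then have "a \<in> set (replicate (Suc k) 1)"
      using ones by simp
    then have "a = 1"
      by auto
    obtain t where "chi_word k v = a # xs2' @ t"
      using pre Cons by (auto simp: prefix_def)
    moreover have "v \<noteq> []"
      using calculation by auto
    ultimately show False
      using hd_chi_word[OF v, of k] \<open>a = 1\<close> by simp
  qed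
  show ?case
    unfolding subst_word_Cons sublist_append
    using Cons.IH[OF v] replicate_one_not_sublist_chi[OF b] not_across by blast
qed

section \<open>The languages of the subshifts X_j\<close>

lemma chi_comp_Suc: "j \<le> n \<Longrightarrow> chi_comp ks j n w = chi_word (ks j) (chi_comp ks (Suc j) n w)"
  by (simp del: upt_Suc add: chi_comp_def upt_conv_Cons)

lemma chi_comp_above: "n < j \<Longrightarrow> chi_comp ks j n w = w"
  by (simp add: chi_comp_def)

lemma chi_comp_same: "chi_comp ks j j w = chi_word (ks j) w"
  by (simp add: chi_comp_Suc chi_comp_above)

lemma chi_comp_split:
  assumes "m \<le> Suc i" and "i \<le> n"
  shows "chi_comp ks m n w = chi_comp ks m i (chi_comp ks (Suc i) n w)"
proof -
  have "[m..<Suc n] = [m..<Suc i] @ [Suc i..<Suc n]"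
    using assms upt_add_eq_append[of m "Suc i" "n - i"] by simp
  then show ?thesis
    by (simp add: chi_comp_def)
qed

lemma chi_comp_invariant:
  assumes "\<And>i w. m \<le> i \<Longrightarrow> P w \<Longrightarrow> P (chi_word (ks i) w)" and "P w"
  shows "P (chi_comp ks m n w)"
proof -
  have "set is \<subseteq> {m..} \<Longrightarrow> P (foldr (\<lambda>j u. chi_word (ks j) u) is w)" for "is"
    by (induction "is") (use assms in auto)
  moreover have "set [m..<Suc n] \<subseteq> {m..}"
    by auto
  ultimately show ?thesis
    unfolding chi_comp_def by blast
qed

text \<open>For n < j the composition chi_comp ks j n is the identity, so every letter belongs to
  language ks j; this is what makes language_desubstitute hold for all words of the language.\<close>

definition language :: "(nat \<Rightarrow> nat) \<Rightarrow> nat \<Rightarrow> nat list set" where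
  "language ks j = {w. \<exists>n a. a \<in> alphabet \<and> sublist w (chi_comp ks j n [a])}"

lemma languageI: "a \<in> alphabet \<Longrightarrow> sublist w (chi_comp ks j n [a]) \<Longrightarrow> w \<in> language ks j"
  unfolding language_def by blast

lemma language_sublist: "w \<in> language ks j \<Longrightarrow> sublist w' w \<Longrightarrow> w' \<in> language ks j"
  unfolding language_def using sublist_order.order_trans by blast

lemma language_subset_alphabet:
  assumes "w \<in> language ks j"
  shows "set w \<subseteq> alphabet"
proof -
  obtain n a where a: "a \<in> alphabet" and w: "sublist w (chi_comp ks j n [a])"
    using assms by (auto simp: language_def)
  have "set (chi_comp ks j n [a]) \<subseteq> alphabet"
    by (rule chi_comp_invariant) (use a set_chi_word_subset_alphabet in auto)
  then show ?thesis
    using set_mono_sublist[OF w] by blast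
qed

lemma letter_in_chi:
  assumes "1 \<le> k" and "a \<in> alphabet"
  shows "\<exists>b\<in>alphabet. a \<in> set (chi k b)"
proof -
  have "1 \<in> set (chi k 2)" "2 \<in> set (chi k 1)" "3 \<in> set (chi k 3)"
    using assms(1) by (auto simp: chi_def)
  then show ?thesis
    using assms(2) unfolding alphabet_def by blast
qed

lemma language_desubstitute:
  assumes k: "1 \<le> ks j" and w: "w \<in> language ks j"
  shows "\<exists>v\<in>language ks (Suc j). sublist w (chi_word (ks j) v)"
proof -
  obtain n a where a: "a \<in> alphabet" and sl: "sublist w (chi_comp ks j n [a])"
    using w by (auto simp: language_def)
  show ?thesis
  proof (cases "j \<le> n")
    case True
    then have "sublist w (chi_word (ks j) (chi_comp ks (Suc j) n [a]))"
      using sl by (simp add: chi_comp_Suc)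
    moreover have "chi_comp ks (Suc j) n [a] \<in> language ks (Suc j)"
      using languageI[OF a] by blast
    ultimately show ?thesis by blast
  next
    case False
    obtain b where b: "b \<in> alphabet" "a \<in> set (chi (ks j) b)"
      using letter_in_chi[OF k a] by blast
    then obtain ys zs where "chi_word (ks j) [b] = ys @ [a] @ zs"
      by (auto dest: split_list)
    then have "sublist [a] (chi_word (ks j) [b])"
      by (simp only: sublist_appendI)
    moreover have "sublist w [a]"
      using sl False by (simp add: chi_comp_above)
    ultimately have "sublist w (chi_word (ks j) [b])"
      by (rule sublist_order.order_trans[rotated])
    moreover have "[b] \<in> language ks (Suc j)"
      by (rule languageI[OF b(1), where n = 0]) (simp add: chi_comp_above)
    ultimately show ?thesis by blast
  qed
qed

lemma factor_in_language:
  assumes x: "x \<in> sadic_subshift ks j" and w: "factor_of w x"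
  shows "w \<in> language ks j"
proof -
  obtain p where p: "\<forall>t<length w. x (p + t) = w ! t"
    using w by (auto simp: factor_of_def)
  obtain y i where y: "y \<in> acc_points {chi_comp ks j n [a] | n a. n \<ge> j \<and> a \<in> alphabet}"
    and yx: "\<forall>t<p + length w. y (i + t) = x t"
    using x unfolding sadic_subshift_def orbit_closure_def by blast
  obtain n a where a: "a \<in> alphabet" and len: "i + p + length w \<le> length (chi_comp ks j n [a])"
    and uy: "\<forall>t<i + p + length w. chi_comp ks j n [a] ! t = y t"
    using y unfolding acc_points_def by blast
  have "w = take (length w) (drop (i + p) (chi_comp ks j n [a]))"
    using len uy yx p by (intro nth_equalityI) (auto simp: add.assoc)
  then have "sublist w (chi_comp ks j n [a])"
    by (metis append_take_drop_id sublist_appendI)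
  then show ?thesis
    using languageI[OF a] by blast
qed

section \<open>Aperiodicity\<close>

definition powers_in_language :: "(nat \<Rightarrow> nat) \<Rightarrow> nat \<Rightarrow> nat list \<Rightarrow> bool" where
  "powers_in_language ks j u \<longleftrightarrow> (\<forall>R. concat (replicate R u) \<in> language ks j)"

lemma concat_replicate_conjugate:
  "concat (replicate (Suc R) u) = take i u @ concat (replicate R (drop i u @ take i u)) @ drop i u"
proof (induction R)
  case (Suc R)
  have "concat (replicate (Suc (Suc R)) u) = concat (replicate (Suc R) u) @ u"
    by (rule concat_replicate_Suc_snoc)
  also have "\<dots> = take i u @ (concat (replicate R (drop i u @ take i u)) @ (drop i u @ take i u)) @ drop i u"
    using Suc by simp
  also have "\<dots> = take i u @ concat (replicate (Suc R) (drop i u @ take i u)) @ drop i u"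
    by (simp only: concat_replicate_Suc_snoc)
  finally show ?case .
qed simp

lemma powers_in_language_conjugate:
  assumes "powers_in_language ks j u"
  shows "powers_in_language ks j (drop i u @ take i u)"
  unfolding powers_in_language_def
proof
  fix R
  have "sublist (concat (replicate R (drop i u @ take i u))) (concat (replicate (Suc R) u))"
    unfolding concat_replicate_conjugate[of R u i] by (rule sublist_appendI)
  then show "concat (replicate R (drop i u @ take i u)) \<in> language ks j"
    using assms language_sublist unfolding powers_in_language_def by blast
qed

lemma powers_in_language_letter:
  assumes "powers_in_language ks j u" and "u \<noteq> []" and "set u \<subseteq> {a}"
  shows "powers_in_language ks j [a]"
  unfolding powers_in_language_def
proof
  fix R
  have "u = replicate (length u) a"
    using assms(3) by (auto intro: replicate_eqI)
  then have "concat (replicate R u) = replicate (R * length u) a"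
    by (metis concat_replicate_replicate)
  also have "\<dots> = replicate R a @ replicate (R * length u - R) a"
  proof -
    have "R \<le> R * length u"
      using assms(2) by (simp add: Suc_le_eq)
    then show ?thesis
      by (simp flip: replicate_add)
  qed
  finally have "sublist (concat (replicate R [a])) (concat (replicate R u))"
    by simp
  then show "concat (replicate R [a]) \<in> language ks j"
    using assms(1) language_sublist unfolding powers_in_language_def by blast
qed

lemma powers_in_language_subset_alphabet:
  assumes "powers_in_language ks j u"
  shows "set u \<subseteq> alphabet"
proof -
  have "concat (replicate 1 u) \<in> language ks j"
    using assms unfolding powers_in_language_def by blast
  then show ?thesis
    using language_subset_alphabet by simp
qed

lemma power_desubstitute:
  assumes k: "1 \<le> ks j" and P: "powers_in_language ks j u" and u: "u \<noteq> []" "hd u \<noteq> 1"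
  shows "\<exists>y\<in>language ks (Suc j). concat (replicate R u) = chi_word (ks j) y"
proof -
  have "concat (replicate (Suc R) u) = concat (replicate R u) @ u"
    by (rule concat_replicate_Suc_snoc)
  also have "\<dots> = (concat (replicate R u) @ [hd u]) @ tl u"
    using u(1) by simp
  finally have "sublist (concat (replicate R u) @ [hd u]) (concat (replicate (Suc R) u))"
    by (simp only: sublist_append_rightI)
  then have "concat (replicate R u) @ [hd u] \<in> language ks j"
    using P language_sublist unfolding powers_in_language_def by blast
  then obtain v where v: "v \<in> language ks (Suc j)"
    and sl: "sublist (concat (replicate R u) @ [hd u]) (chi_word (ks j) v)"
    using language_desubstitute[of ks j, OF k] by blast
  have "hd (concat (replicate R u) @ [hd u]) \<noteq> 1"
    using u by (cases R) auto
  then obtain y where "sublist y v" "concat (replicate R u) = chi_word (ks j) y"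
    using chi_word_desubstitute[OF language_subset_alphabet[OF v] sl] u(2) by blast
  then show ?thesis
    using language_sublist[OF v] by blast
qed

lemma powers_in_language_desubstitute:
  assumes k: "1 \<le> ks j" and P: "powers_in_language ks j u" and u: "u \<noteq> []" "hd u \<noteq> 1"
  shows "\<exists>u'. u = chi_word (ks j) u' \<and> powers_in_language ks (Suc j) u'"
proof -
  obtain u' where u': "u' \<in> language ks (Suc j)" "u = chi_word (ks j) u'"
    using power_desubstitute[OF k P u, of 1] by auto
  have "concat (replicate R u') \<in> language ks (Suc j)" for R
  proof -
    obtain y where y: "y \<in> language ks (Suc j)" "concat (replicate R u) = chi_word (ks j) y"
      using power_desubstitute[OF k P u] by blast
    have "set (concat (replicate R u')) \<subseteq> alphabet"
      using language_subset_alphabet[OF u'(1)] by auto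
    moreover have "chi_word (ks j) y = chi_word (ks j) (concat (replicate R u'))"
      using y(2) u'(2) by (simp add: subst_word_concat_replicate)
    ultimately have "y = concat (replicate R u')"
      using chi_word_inj[OF k language_subset_alphabet[OF y(1)]] by blast
    then show ?thesis
      using y(1) by simp
  qed
  then show ?thesis
    using u'(2) unfolding powers_in_language_def by blast
qed

lemma not_powers_in_language_one:
  assumes "1 \<le> ks j"
  shows "\<not> powers_in_language ks j [1]"
proof
  assume "powers_in_language ks j [1]"
  then have "replicate (Suc (ks j)) 1 \<in> language ks j"
    unfolding powers_in_language_def by (metis concat_replicate_single)
  then obtain v where "v \<in> language ks (Suc j)" "sublist (replicate (Suc (ks j)) 1) (chi_word (ks j) v)"
    using language_desubstitute[of ks j, OF assms] by blast
  then show False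
    using replicate_one_not_sublist_chi_word language_subset_alphabet by blast
qed

lemma powers_in_language_three:
  assumes k: "1 \<le> ks j" and P: "powers_in_language ks j [3]"
  shows "ks j = 1 \<and> powers_in_language ks (Suc j) [3]"
proof -
  obtain u' where u': "chi_word (ks j) u' = [3]" "powers_in_language ks (Suc j) u'"
    using powers_in_language_desubstitute[OF k P] by force
  have alph: "set u' \<subseteq> alphabet"
    using powers_in_language_subset_alphabet[OF u'(2)] .
  then have "length u' = 1"
    using length_filter_chi_word[OF alph, of "ks j"] u'(1) by simp
  then obtain b where b: "u' = [b]"
    by (cases u') auto
  then have "b \<in> alphabet" and "chi (ks j) b = [3]"
    using alph u'(1) by auto
  then have "b = 3 \<and> ks j = 1"
    using k by (auto simp: alphabet_iff chi_def)
  then show ?thesis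
    using u'(2) b by simp
qed

lemma powers_in_language_shorten:
  assumes k: "1 \<le> ks j" and P: "powers_in_language ks j u" and one: "1 \<in> set u"
  shows "\<exists>u'. u' \<noteq> [] \<and> length u' < length u \<and> powers_in_language ks (Suc j) u'"
proof (cases "set u \<subseteq> {1}")
  case True
  have "u \<noteq> []"
    using one by auto
  then have "powers_in_language ks j [1]"
    using powers_in_language_letter[OF P _ True] by blast
  then show ?thesis
    using not_powers_in_language_one[of ks j, OF k] by blast
next
  case False
  then obtain i where i: "i < length u" "u ! i \<noteq> 1"
    by (metis in_set_conv_nth singletonI subsetI)
  define r where "r = drop i u @ take i u"
  have set_r: "set r = set u"
    unfolding r_def by (metis append_take_drop_id set_append sup_commute)
  have len_r: "length r = length u"
    unfolding r_def by simp
  have "r \<noteq> []" "hd r \<noteq> 1"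
    using i unfolding r_def by (auto simp: hd_drop_conv_nth)
  then obtain u' where u': "r = chi_word (ks j) u'" "powers_in_language ks (Suc j) u'"
    using powers_in_language_desubstitute[OF k powers_in_language_conjugate[OF P]] r_def by blast
  have "length u' < length r"
    using length_less_length_chi_word[OF powers_in_language_subset_alphabet[OF u'(2)]] u'(1) set_r one
    by simp
  moreover have "u' \<noteq> []"
    using \<open>r \<noteq> []\<close> u'(1) by auto
  ultimately show ?thesis
    using u'(2) len_r by auto
qed

lemma powers_in_language_two:
  assumes k: "1 \<le> ks j" and P: "powers_in_language ks j u"
    and two: "2 \<in> set u" and no_one: "1 \<notin> set u"
  shows "\<exists>u'. 1 \<in> set u' \<and> length u' \<le> length u \<and> powers_in_language ks (Suc j) u'"
proof -
  have "u \<noteq> []" "hd u \<noteq> 1"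
    using two no_one by (cases u; auto)+
  then obtain u' where u': "u = chi_word (ks j) u'" "powers_in_language ks (Suc j) u'"
    using powers_in_language_desubstitute[OF k P] by blast
  have alph: "set u' \<subseteq> alphabet"
    using powers_in_language_subset_alphabet[OF u'(2)] .
  obtain b where b: "b \<in> set u'" "2 \<in> set (chi (ks j) b)"
    using two u'(1) by (auto simp: set_subst_word)
  moreover have "b \<in> alphabet"
    using b(1) alph by blast
  ultimately have "b = 1"
    by (auto simp: alphabet_iff chi_def)
  moreover have "length u' \<le> length u"
    using length_le_length_chi_word[OF alph] u'(1) by simp
  ultimately show ?thesis
    using b(1) u'(2) by auto
qed

lemma not_powers_in_language_three:
  assumes C: "coding_seq_infinite_type ks" and j: "1 \<le> j"
  shows "\<not> powers_in_language ks j [3]"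
proof
  assume P: "powers_in_language ks j [3]"
  have powers: "powers_in_language ks (j + d) [3]" for d
  proof (induction d)
    case (Suc d)
    have "1 \<le> ks (j + d)"
      using coding_seq_ge_one[OF C] j by simp
    then show ?case
      using powers_in_language_three[OF _ Suc.IH] by simp
  qed (simp add: P)
  obtain j' where j': "j < j'" "1 < ks j'"
    using coding_seq_exists_large_index[OF C] by blast
  have "1 \<le> ks (j + (j' - j))"
    using coding_seq_ge_one[OF C] j by simp
  then have "ks (j + (j' - j)) = 1"
    using powers_in_language_three[OF _ powers] by blast
  with j' show False
    by simp
qed

lemma powers_in_language_reduce:
  assumes C: "coding_seq_infinite_type ks" and j: "1 \<le> j"
    and P: "powers_in_language ks j u" and u: "u \<noteq> []"
  shows "\<exists>j' u'. 1 \<le> j' \<and> u' \<noteq> [] \<and> length u' < length u \<and> powers_in_language ks j' u'"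
proof -
  have k: "1 \<le> ks j" "1 \<le> ks (Suc j)"
    using coding_seq_ge_one[OF C] j by simp_all
  consider "1 \<in> set u" | "1 \<notin> set u" "2 \<in> set u" | "set u \<subseteq> {3}"
    using powers_in_language_subset_alphabet[OF P] unfolding alphabet_def by blast
  then show ?thesis
  proof cases
    case 1
    then obtain u' where "u' \<noteq> []" "length u' < length u" "powers_in_language ks (Suc j) u'"
      using powers_in_language_shorten[of ks j, OF k(1) P] by blast
    then show ?thesis
      by (intro exI[of _ "Suc j"] exI[of _ u']) simp
  next
    case 2
    then obtain u' where u': "1 \<in> set u'" "length u' \<le> length u" "powers_in_language ks (Suc j) u'"
      using powers_in_language_two[OF k(1) P] by blast
    then obtain u'' where "u'' \<noteq> []" "length u'' < length u'" "powers_in_language ks (Suc (Suc j)) u''"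
      using powers_in_language_shorten[of ks "Suc j", OF k(2)] by blast
    then show ?thesis
      using u'(2) by (intro exI[of _ "Suc (Suc j)"] exI[of _ u'']) simp
  next
    case 3
    then show ?thesis
      using powers_in_language_letter[OF P u] not_powers_in_language_three[OF C j] by blast
  qed
qed

theorem no_powers_in_language:
  assumes "coding_seq_infinite_type ks"
  shows "1 \<le> j \<Longrightarrow> u \<noteq> [] \<Longrightarrow> \<not> powers_in_language ks j u"
proof (induction "length u" arbitrary: j u rule: less_induct)
  case less
  show ?case
  proof
    assume "powers_in_language ks j u"
    then obtain j' u' where "1 \<le> j'" "u' \<noteq> []" "length u' < length u" "powers_in_language ks j' u'"
      using powers_in_language_reduce[OF assms less.prems(1)] less.prems(2) by blast
    then show False
      using less.hyps by blast
  qed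
qed

lemma funpow_shift: "(shift ^^ k) x = (\<lambda>t. x (t + k))"
  by (induction k) (auto simp: shift_def)

lemma periodic_prefix_power:
  assumes "(shift ^^ k) x = x"
  shows "map x [0..<R * k] = concat (replicate R (map x [0..<k]))"
proof (induction R)
  case (Suc R)
  have per: "x (t + k) = x t" for t
    using fun_cong[OF assms, of t] by (simp add: funpow_shift)
  have "map x [0..<Suc R * k] = map x [0..<k] @ map x [k..<R * k + k]"
    by (simp add: add.commute upt_add_eq_append[of 0 k "R * k", simplified])
  also have "map x [k..<R * k + k] = map x [0..<R * k]"
    by (simp flip: map_add_upt add: per)
  finally show ?case
    using Suc by simp
qed simp

theorem aperiodic_sadic_subshift:
  assumes C: "coding_seq_infinite_type ks"
  shows "aperiodic (sadic_subshift ks 1)"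
  unfolding aperiodic_def
proof (intro notI, elim bexE exE conjE)
  fix x k
  assume x: "x \<in> sadic_subshift ks 1" and k: "1 \<le> k" and per: "(shift ^^ k) x = x"
  have "powers_in_language ks 1 (map x [0..<k])"
    unfolding powers_in_language_def
  proof
    fix R
    have "factor_of (map x [0..<R * k]) x"
      unfolding factor_of_def by (intro exI[of _ 0]) simp
    then show "concat (replicate R (map x [0..<k])) \<in> language ks 1"
      using factor_in_language[OF x] periodic_prefix_power[OF per] by simp
  qed
  then show False
    using no_powers_in_language[OF C, of 1] k by simp
qed

section \<open>Primitivity\<close>

lemma set_chi_one: "set (chi k 1) = {2}"
  by (simp add: chi_def)

lemma set_chi_two: "1 \<le> k \<Longrightarrow> set (chi k 2) = {1, 3}"
  by (cases k) (auto simp: chi_def)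

lemma set_chi_three: "1 < k \<Longrightarrow> set (chi k 3) = {1, 3}"
  by (cases "k - 1") (auto simp: chi_def)

lemma three_in_set_chi_three: "3 \<in> set (chi k 3)"
  by (simp add: chi_def)

lemma set_chi_subset_set_chi_word: "b \<in> set w \<Longrightarrow> set (chi k b) \<subseteq> set (chi_word k w)"
  unfolding set_subst_word by blast

lemma alphabet_subset_set_chi_word:
  assumes "1 \<le> k" and "alphabet \<subseteq> set w"
  shows "alphabet \<subseteq> set (chi_word k w)"
proof -
  have "1 \<in> set w" "2 \<in> set w"
    using assms(2) by (auto simp: alphabet_def)
  then have "set (chi k 1) \<union> set (chi k 2) \<subseteq> set (chi_word k w)"
    using set_chi_subset_set_chi_word by (metis Un_least)
  then show ?thesis
    unfolding set_chi_one set_chi_two[OF assms(1)] by (simp add: alphabet_def)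
qed

lemma alphabet_subset_set_chi_word_one_three:
  assumes "1 < k" and "{1, 3} \<subseteq> set w"
  shows "alphabet \<subseteq> set (chi_word k w)"
proof -
  have "set (chi k 1) \<union> set (chi k 3) \<subseteq> set (chi_word k w)"
    using assms(2) set_chi_subset_set_chi_word by (metis Un_least insert_subset)
  then show ?thesis
    unfolding set_chi_one set_chi_three[OF assms(1)] by (simp add: alphabet_def)
qed

lemma one_three_subset_set_chi_word_chi_word:
  assumes "1 \<le> k'" and "{1, 3} \<subseteq> set w"
  shows "{1, 3} \<subseteq> set (chi_word k' (chi_word k w))"
proof -
  have "set (chi k 1) \<subseteq> set (chi_word k w)"
    using assms(2) set_chi_subset_set_chi_word by blast
  then have "2 \<in> set (chi_word k w)"
    unfolding set_chi_one by simp
  then show ?thesis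
    using set_chi_subset_set_chi_word[of 2 _ k'] set_chi_two[OF assms(1)] by simp
qed

lemma one_three_subset_set_chi_word_three:
  assumes "1 < k" and "3 \<in> set w"
  shows "{1, 3} \<subseteq> set (chi_word k w)"
  using set_chi_subset_set_chi_word[OF assms(2), of k] set_chi_three[OF assms(1)] by simp

lemma three_in_set_chi_word_chi_word:
  assumes "1 \<le> k" and "a \<in> alphabet"
  shows "3 \<in> set (chi_word k' (chi_word k [a]))"
proof -
  have "2 \<in> set (chi k 1)" "3 \<in> set (chi k 2)" "3 \<in> set (chi k 3)"
    unfolding set_chi_one set_chi_two[OF assms(1)] by (auto simp: chi_def)
  then have "3 \<in> set (chi_word k [a]) \<or> 2 \<in> set (chi_word k [a])"
    using assms(2) unfolding alphabet_def by auto
  moreover have "3 \<in> set (chi k' 2)"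
    by (simp add: chi_def)
  ultimately show ?thesis
    using set_chi_subset_set_chi_word three_in_set_chi_three by blast
qed

lemma one_three_subset_set_chi_comp_even:
  assumes "\<And>i. m < i \<Longrightarrow> 1 \<le> ks i" and "{1, 3} \<subseteq> set w"
  shows "{1, 3} \<subseteq> set (chi_comp ks (Suc m) (m + 2 * d) w)"
  using assms(2)
proof (induction d arbitrary: w)
  case 0
  then show ?case
    by (simp add: chi_comp_above)
next
  case (Suc d)
  let ?i = "m + 2 * d"
  have "chi_comp ks (Suc m) (m + 2 * Suc d) w = chi_comp ks (Suc m) ?i (chi_comp ks (Suc ?i) (Suc (Suc ?i)) w)"
    using chi_comp_split[of "Suc m" ?i "Suc (Suc ?i)"] by simp
  also have "chi_comp ks (Suc ?i) (Suc (Suc ?i)) w = chi_word (ks (Suc ?i)) (chi_word (ks (Suc (Suc ?i))) w)"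
    by (simp add: chi_comp_Suc chi_comp_above)
  finally show ?case
    using Suc one_three_subset_set_chi_word_chi_word assms(1) by simp
qed

lemma alphabet_subset_set_chi_comp:
  assumes pos: "\<And>i. m \<le> i \<Longrightarrow> 1 \<le> ks i" and j: "m \<le> j" "1 < ks j" and w: "{1, 3} \<subseteq> set w"
  shows "alphabet \<subseteq> set (chi_comp ks m (j + 2 * d) w)"
proof -
  let ?w' = "chi_comp ks (Suc j) (j + 2 * d) w"
  have "{1, 3} \<subseteq> set ?w'"
    using one_three_subset_set_chi_comp_even[OF _ w] pos j(1) by simp
  then have full: "alphabet \<subseteq> set (chi_comp ks j j ?w')"
    using alphabet_subset_set_chi_word_one_three[OF j(2)] by (simp add: chi_comp_same)
  have "alphabet \<subseteq> set (chi_comp ks m j ?w')"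
  proof (cases "m = j")
    case True
    then show ?thesis using full by simp
  next
    case False
    then have "chi_comp ks m j ?w' = chi_comp ks m (j - 1) (chi_comp ks j j ?w')"
      using chi_comp_split[of m "j - 1" j] j(1) by simp
    then show ?thesis
      using chi_comp_invariant[where P = "\<lambda>w. alphabet \<subseteq> set w", OF _ full] pos
        alphabet_subset_set_chi_word by simp
  qed
  moreover have "chi_comp ks m (j + 2 * d) w = chi_comp ks m j ?w'"
    using chi_comp_split[of m j "j + 2 * d"] j(1) by simp
  ultimately show ?thesis
    by simp
qed

lemma one_three_subset_set_chi_comp_letter:
  assumes "1 < ks q" and "1 \<le> ks (q + 2)" and "a \<in> alphabet"
  shows "{1, 3} \<subseteq> set (chi_comp ks q (q + 2) [a])"
proof -
  have "3 \<in> set (chi_word (ks (Suc q)) (chi_word (ks (q + 2)) [a]))"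
    by (rule three_in_set_chi_word_chi_word[OF assms(2,3)])
  then have "{1, 3} \<subseteq> set (chi_word (ks q) (chi_word (ks (Suc q)) (chi_word (ks (q + 2)) [a])))"
    by (rule one_three_subset_set_chi_word_three[OF assms(1)])
  moreover have "chi_comp ks q (q + 2) [a] = chi_word (ks q) (chi_word (ks (Suc q)) (chi_word (ks (q + 2)) [a]))"
    by (simp add: chi_comp_Suc chi_comp_above)
  ultimately show ?thesis
    by simp
qed

lemma coding_seq_exists_parity_pair:
  assumes C: "coding_seq_infinite_type ks"
  shows "\<exists>q j d. m < q \<and> 1 < ks q \<and> m \<le> j \<and> 1 < ks j \<and> q - 1 = j + 2 * d"
proof -
  obtain je where je: "m < je" "1 < ks je" "even je"
    using coding_seq_exists_large_index[OF C] by blast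
  obtain jo where jo: "m < jo" "1 < ks jo" "odd jo"
    using coding_seq_exists_large_index[OF C, of _ False] by blast
  obtain q where q: "je + jo < q" "1 < ks q"
    using coding_seq_exists_large_index[OF C] by blast
  have "\<exists>j. m \<le> j \<and> 1 < ks j \<and> j < q \<and> even (q - 1 - j)"
  proof (cases "even (q - 1)")
    case True
    then show ?thesis
      using je q by (intro exI[of _ je]) auto
  next
    case False
    then show ?thesis
      using jo q by (intro exI[of _ jo]) auto
  qed
  then obtain j where j: "m \<le> j" "1 < ks j" "j < q" "even (q - 1 - j)"
    by blast
  then have "q - 1 = j + 2 * ((q - 1 - j) div 2)"
    using even_two_times_div_two[OF j(4)] by simp
  then show ?thesis
    using j(1,2) je(1) q by (intro exI[of _ q] exI[of _ j] exI[of _ "(q - 1 - j) div 2"]) auto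
qed

theorem sadic_primitive_coding_seq:
  assumes C: "coding_seq_infinite_type ks"
  shows "sadic_primitive ks"
  unfolding sadic_primitive_def
proof (intro allI impI)
  fix m :: nat
  assume m: "1 \<le> m"
  have pos: "1 \<le> ks i" if "m \<le> i" for i
    using coding_seq_ge_one[OF C] m that by simp
  obtain q j d where q: "m < q" "1 < ks q" and j: "m \<le> j" "1 < ks j" "q - 1 = j + 2 * d"
    using coding_seq_exists_parity_pair[OF C] by blast
  have "alphabet \<subseteq> set (chi_comp ks m (q + 2) [a])" if a: "a \<in> alphabet" for a
  proof -
    have "chi_comp ks m (q + 2) [a] = chi_comp ks m (j + 2 * d) (chi_comp ks q (q + 2) [a])"
      using chi_comp_split[of m "q - 1" "q + 2"] q j(3) by simp
    moreover have "{1, 3} \<subseteq> set (chi_comp ks q (q + 2) [a])"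
      using one_three_subset_set_chi_comp_letter[of ks q, OF q(2) _ a] pos q(1) by simp
    ultimately show ?thesis
      using alphabet_subset_set_chi_comp[of m ks, OF pos j(1,2)] by simp
  qed
  then show "\<exists>n\<ge>m. \<forall>a\<in>alphabet. alphabet \<subseteq> set (chi_comp ks m n [a])"
    using q(1) by (intro exI[of _ "q + 2"]) auto
qed

theorem proposition2p3:
  fixes ks :: "nat \<Rightarrow> nat"
  assumes "coding_seq_infinite_type ks"
  shows "sadic_primitive ks \<and> sadic_comb_recognizable ks \<and> aperiodic (sadic_subshift ks 1)"
  using sadic_primitive_coding_seq[OF assms] aperiodic_sadic_subshift[OF assms] comb_recognizable_chi
  by (simp add: sadic_comb_recognizable_def)

end
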